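(* Let $l:\mathbb{R}\to\mathbb{R}$ be continuous and $l_o(x):=\frac12(l(x)-l(-x))$. Then there exist $c_1,d_1,d_2\in\mathbb{R}$ such that $$\limsup_{x\to+\infty}\big(l_o(x)-c_1x-d_1\big)=0\quad\text{and}\quad\limsup_{x\to-\infty}\big(l_o(x)-c_1x-d_2\big)=0$$ if and only if there exist $q,q'\in\mathbb{R}$ such that $l_o(x)\le q'x+q$ for every $x\in\mathbb{R}$. *)

theory Defs
  imports "HOL-Analysis.Analysis"
begin

definition odd_part :: "(real \<Rightarrow> real) \<Rightarrow> real \<Rightarrow> real" where
  "odd_part l x = (l x - l (- x)) / 2"

end

theory Submission
  imports Defs
begin

text \<open>If \<open>l\<^sub>o(x) - c\<^sub>1 x\<close> has finite upper limits at both ends, continuity bounds it on the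
  compact middle interval, so it is bounded above everywhere. Conversely, an upper bound
  \<open>l\<^sub>o(x) \<le> q' x + q\<close> for the odd function \<open>l\<^sub>o\<close> gives, applied at \<open>-x\<close>, also the lower bound
  \<open>l\<^sub>o(x) \<ge> q' x - q\<close>; so \<open>l\<^sub>o(x) - q' x\<close> is bounded, its upper limits at \<open>\<plusminus>\<infinity>\<close> are finite
  reals, and the constants \<open>d\<^sub>1, d\<^sub>2\<close> shift them to 0.\<close>

lemma odd_part_uminus: "odd_part l (- x) = - odd_part l x"
  unfolding odd_part_def by (simp add: field_simps)

lemma continuous_on_odd_part:
  fixes l :: "real \<Rightarrow> real"
  assumes "continuous_on UNIV l"
  shows "continuous_on UNIV (odd_part l)"
proof -
  have "continuous_on UNIV (\<lambda>x. l (- x))"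
    by (rule continuous_on_compose2[OF assms continuous_on_minus[OF continuous_on_id]]) simp
  then show ?thesis
    unfolding odd_part_def using assms by (intro continuous_intros) auto
qed

lemma odd_abs_bound_if_upper_bound:
  fixes f :: "real \<Rightarrow> real"
  assumes odd: "\<And>x. f (- x) = - f x" and upper: "\<And>x. f x \<le> a * x + b"
  shows "\<bar>f x - a * x\<bar> \<le> b"
  using upper[of x] upper[of "- x"] odd[of x] by auto

lemma Limsup_ereal_shift_eq_0:
  fixes h :: "'a \<Rightarrow> real"
  assumes "F \<noteq> bot" and bounded: "eventually (\<lambda>x. \<bar>h x\<bar> \<le> B) F"
  shows "\<exists>d. Limsup F (\<lambda>x. ereal (h x - d)) = 0"
proof -
  let ?L = "Limsup F (\<lambda>x. ereal (h x))"
  have "?L \<le> ereal B"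
    by (rule Limsup_bounded) (use bounded in \<open>auto elim: eventually_mono\<close>)
  moreover have "ereal (- B) \<le> Liminf F (\<lambda>x. ereal (h x))"
    by (rule Liminf_bounded) (use bounded in \<open>auto elim: eventually_mono\<close>)
  moreover have "Liminf F (\<lambda>x. ereal (h x)) \<le> ?L"
    using \<open>F \<noteq> bot\<close> by (rule Liminf_le_Limsup)
  ultimately obtain d where d: "?L = ereal d"
    by (cases ?L) auto
  have "Limsup F (\<lambda>x. ereal (h x - d)) = Limsup F (\<lambda>x. ereal (h x) + ereal (- d))"
    by simp
  also have "\<dots> = ?L + ereal (- d)"
    using \<open>F \<noteq> bot\<close> by (intro Limsup_add_ereal_right) auto
  also have "\<dots> = 0"
    using d by simp
  finally show ?thesis by blast
qed

lemma eventually_less_if_Limsup_ereal_eq_0: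
  assumes "Limsup F (\<lambda>x. ereal (f x)) = 0"
  shows "eventually (\<lambda>x. f x < 1) F"
  using Limsup_lessD[of F "\<lambda>x. ereal (f x)" 1] assms by (simp add: one_ereal_def)

lemma continuous_bounded_above_if_eventually_bounded_above:
  fixes g :: "real \<Rightarrow> real"
  assumes cont: "continuous_on UNIV g"
    and top: "eventually (\<lambda>x. g x \<le> a) at_top" and bot: "eventually (\<lambda>x. g x \<le> b) at_bot"
  shows "\<exists>B. \<forall>x. g x \<le> B"
proof -
  obtain M where M: "\<And>x. x \<ge> M \<Longrightarrow> g x \<le> a"
    using top unfolding eventually_at_top_linorder by auto
  obtain N where N: "\<And>x. x \<le> N \<Longrightarrow> g x \<le> b"
    using bot unfolding eventually_at_bot_linorder by auto
  have "compact (g ` {N..M})"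
    by (intro compact_continuous_image continuous_on_subset[OF cont]) auto
  then have "bdd_above (g ` {N..M})"
    by (intro bounded_imp_bdd_above compact_imp_bounded)
  then obtain C where C: "\<forall>x\<in>{N..M}. g x \<le> C"
    by (auto simp: bdd_above_def)
  have "g x \<le> max (max a b) C" for x
    using M[of x] N[of x] C by (metis atLeastAtMost_iff le_max_iff_disj nle_le)
  then show ?thesis by blast
qed

theorem lemma19:
  fixes l :: "real \<Rightarrow> real"
  assumes "continuous_on UNIV l"
  shows "(\<exists>c1 d1 d2 :: real.
            Limsup at_top (\<lambda>x. ereal (odd_part l x - c1 * x - d1)) = 0 \<and>
            Limsup at_bot (\<lambda>x. ereal (odd_part l x - c1 * x - d2)) = 0)
         \<longleftrightarrow> (\<exists>q q' :: real. \<forall>x. odd_part l x \<le> q' * x + q)"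
proof
  assume "\<exists>c1 d1 d2 :: real.
            Limsup at_top (\<lambda>x. ereal (odd_part l x - c1 * x - d1)) = 0 \<and>
            Limsup at_bot (\<lambda>x. ereal (odd_part l x - c1 * x - d2)) = 0"
  then obtain c1 d1 d2 where
    "Limsup at_top (\<lambda>x. ereal (odd_part l x - c1 * x - d1)) = 0"
    "Limsup at_bot (\<lambda>x. ereal (odd_part l x - c1 * x - d2)) = 0"
    by blast
  then have "eventually (\<lambda>x. odd_part l x - c1 * x - d1 < 1) at_top"
    "eventually (\<lambda>x. odd_part l x - c1 * x - d2 < 1) at_bot"
    by (auto intro: eventually_less_if_Limsup_ereal_eq_0)
  then have "eventually (\<lambda>x. odd_part l x - c1 * x \<le> d1 + 1) at_top"
    "eventually (\<lambda>x. odd_part l x - c1 * x \<le> d2 + 1) at_bot"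
    by (auto elim: eventually_mono)
  moreover have "continuous_on UNIV (\<lambda>x. odd_part l x - c1 * x)"
    using continuous_on_odd_part[OF assms] by (intro continuous_intros)
  ultimately obtain B where "\<And>x. odd_part l x - c1 * x \<le> B"
    using continuous_bounded_above_if_eventually_bounded_above by blast
  then have "\<forall>x. odd_part l x \<le> c1 * x + B"
    by (simp add: algebra_simps)
  then show "\<exists>q q'. \<forall>x. odd_part l x \<le> q' * x + q" by blast
next
  assume "\<exists>q q'. \<forall>x. odd_part l x \<le> q' * x + q"
  then obtain q q' where "\<And>x. odd_part l x \<le> q' * x + q" by blast
  then have "\<bar>odd_part l x - q' * x\<bar> \<le> q" for x
    by (rule odd_abs_bound_if_upper_bound[where f = "odd_part l", OF odd_part_uminus])
  then have "\<exists>d. Limsup F (\<lambda>x. ereal (odd_part l x - q' * x - d)) = 0"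
    if "F \<noteq> bot" for F :: "real filter"
    using Limsup_ereal_shift_eq_0[OF that, of "\<lambda>x. odd_part l x - q' * x" q] by simp
  then obtain d1 d2 where
    "Limsup at_top (\<lambda>x. ereal (odd_part l x - q' * x - d1)) = 0"
    "Limsup at_bot (\<lambda>x. ereal (odd_part l x - q' * x - d2)) = 0"
    by (metis trivial_limit_at_bot_linorder trivial_limit_at_top_linorder)
  then show "\<exists>c1 d1 d2.
            Limsup at_top (\<lambda>x. ereal (odd_part l x - c1 * x - d1)) = 0 \<and>
            Limsup at_bot (\<lambda>x. ereal (odd_part l x - c1 * x - d2)) = 0"
    by blast
qed

end
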